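(* For all reals $x\ge D\ge 0$, \[ \sum_{d\le \min(D,\,x/10^{12})}\frac{\mu^2(d)\varphi(d)}{d^{2}\log(x/d)^2}\,g_1(d)^2\le 0.047. \]
   Context: $\mu$ is the Möbius function, $\varphi$ Euler's totient, $d$ ranges over positive integers (an empty sum is $0$). Let $\xi=1-1/(12\log 10)$. $g_1$ is the multiplicative function defined on primes by $g_1(2)=2.06$ and $g_1(p)=p^\xi/(p^\xi-1)$ for $p\ge 3$. *)

theory Defs
  imports "HOL-Number_Theory.Number_Theory" "HOL-Computational_Algebra.Squarefree"
begin

definition moebius_mu :: "nat \<Rightarrow> int" where
  "moebius_mu d = (if squarefree d then (-1) ^ card (prime_factors d) else 0)"

definition xi :: real where
  "xi = 1 - 1 / (12 * ln 10)"

definition g1_prime :: "nat \<Rightarrow> real" where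
  "g1_prime p = (if p = 2 then 2.06 else real p powr xi / (real p powr xi - 1))"

text \<open>Multiplicative function determined by its values at primes; only its
values on squarefree arguments matter below, where it is the product over
the prime factors.\<close>
definition g1 :: "nat \<Rightarrow> real" where
  "g1 d = (\<Prod>p\<in>prime_factors d. g1_prime p)"

end

theory Submission
  imports Defs
begin

(*
  For squarefree d the summand is the product of euler_factor p = (1 - 1/p) g1(p)^2 / p
  over p | d, divided by log(x/d)^2.  For p >= 5 write euler_factor p = 1/p + excess p,
  and let excess p = euler_factor p for p = 2, 3.  Expanding the product splits d = m n,
  where m is the product of a set B of primes contributing their excess and n, coprime
  to 6, collects the primes contributing 1/p.  For fixed B the sum over n <= y/m of
  1/(n log(x/(m n))^2) is at most 1/(3 log(x/y)) <= 1/81: the integers > 1 coprime to 6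
  fit one into each interval [3j+1, 3j+4], on which the integral of 1/(t log(X/t)^2) is
  an increment of 1/log(X/t), so the sum telescopes.  Summing over B costs the Euler
  product of 1 + excess p over p <= y.  As excess p is of order p^(-1-xi), this product
  is bounded numerically: excess 2 = 1.0609, excess 3 <= 0.5225 and the excesses of the
  primes p >= 5 add up to less than 0.186, so the product is below 3.8 < 81 * 0.047.
*)

lemma finite_nat_real_le: "finite {n::nat. real n \<le> y}"
proof (rule finite_subset)
  show "{n::nat. real n \<le> y} \<subseteq> {..nat \<lceil>y\<rceil>}"
    using ceiling_mono[of "real _" y] by (auto simp: le_nat_iff)
qed simp

lemma ln_10_ge: "9/4 \<le> ln (10::real)"
proof -
  have square: "x^2 \<le> b" if "x \<le> a" "0 \<le> x" "a * a \<le> b" for x a b :: real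
    using that by (metis mult_mono order_trans power2_eq_square)
  define r where "r = exp (9/256::real)"
  have "r \<le> 1 + 9/256 + (9/256)^2" unfolding r_def by (rule exp_bound) auto
  then have "r \<le> 10364/10000" by (simp add: power2_eq_square)
  then have "r^2 \<le> 5371/5000" by (rule square) (simp_all add: r_def)
  then have "(r^2)^2 \<le> 577/500" by (rule square) simp_all
  then have "((r^2)^2)^2 \<le> 6659/5000" by (rule square) simp_all
  then have "(((r^2)^2)^2)^2 \<le> 17737/10000" by (rule square) simp_all
  then have "((((r^2)^2)^2)^2)^2 \<le> 31461/10000" by (rule square) simp_all
  then have "(((((r^2)^2)^2)^2)^2)^2 \<le> 10" by (rule square) simp_all
  then have "r ^ 64 \<le> 10" by (simp flip: power_mult)
  then have "exp (real 64 * (9/256)) \<le> exp (ln (10::real))"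
    unfolding r_def by (subst exp_of_nat_mult) simp
  then have "real 64 * (9/256) \<le> ln (10::real)" by (simp only: exp_le_cancel_iff)
  then show ?thesis by simp
qed

definition alpha :: real where "alpha = 1 / (12 * ln 10)"

lemma xi_eq: "xi = 1 - alpha"
  unfolding xi_def alpha_def ..

lemma alpha_pos: "0 < alpha"
  unfolding alpha_def by simp

lemma alpha_le: "alpha \<le> 1/27"
  unfolding alpha_def using ln_10_ge by (simp add: field_simps)

lemma powr_alpha_le_exp:
  fixes t :: real and j k :: nat
  assumes "1 \<le> t" "0 < j" "t ^ j \<le> 10 ^ k"
  shows "t powr alpha \<le> exp (real k / (12 * real j))"
proof -
  have "ln (t ^ j) \<le> ln (10 ^ k)" using assms by simp
  then have "j * ln t \<le> k * ln 10" using assms by (simp add: ln_realpow)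
  then have "alpha * ln t \<le> real k / (12 * real j)"
    unfolding alpha_def using assms by (simp add: field_simps)
  then show ?thesis using assms by (simp add: powr_def)
qed

lemma one_le_powr_alpha: "1 \<le> t \<Longrightarrow> 1 \<le> t powr alpha"
  using alpha_pos by (simp add: ge_one_powr_ge_zero)

lemma powr_alpha_less: "1 < t \<Longrightarrow> t powr alpha < t"
  using powr_less_mono[of alpha 1 t] alpha_le by simp

lemma ln_ge_27:
  assumes "10^12 \<le> y"
  shows "27 \<le> ln (y::real)"
proof -
  have "ln ((10::real)^12) \<le> ln y" using assms by (subst ln_le_cancel_iff) auto
  moreover have "ln ((10::real)^12) = 12 * ln 10" using ln_realpow[of 10 12] by simp
  ultimately show ?thesis using ln_10_ge by linarith
qed

section \<open>The local factors\<close>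

definition euler_factor :: "nat \<Rightarrow> real" where
  "euler_factor p = (1 - 1 / real p) * (g1_prime p)^2 / real p"

definition excess :: "nat \<Rightarrow> real" where
  "excess p = (if p = 2 \<or> p = 3 then euler_factor p else euler_factor p - 1 / real p)"

definition excess_bound :: "real \<Rightarrow> real \<Rightarrow> real" where
  "excess_bound E t = ((1 - 1/t) / (1 - E/t)^2 - 1) / t"

lemma excess_bound_mono:
  assumes "0 \<le> E" "E \<le> E'" "E' < t" "1 \<le> t"
  shows "excess_bound E t \<le> excess_bound E' t"
proof -
  have pos: "0 < 1 - E'/t" using assms by (simp add: field_simps)
  moreover have "1 - E'/t \<le> 1 - E/t" using assms by (simp add: divide_right_mono)
  ultimately have "(1 - E'/t)^2 \<le> (1 - E/t)^2" by (intro power_mono) auto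
  moreover have "0 \<le> 1 - 1/t" using assms by (simp add: field_simps)
  ultimately have "(1 - 1/t) / (1 - E/t)^2 \<le> (1 - 1/t) / (1 - E'/t)^2"
    using pos \<open>1 - E'/t \<le> 1 - E/t\<close> by (intro divide_left_mono mult_pos_pos) auto
  then show ?thesis unfolding excess_bound_def using assms by (simp add: divide_right_mono)
qed

lemma excess_bound_nonneg:
  assumes "1 \<le> E" "E < t"
  shows "0 \<le> excess_bound E t"
proof -
  have pos: "0 < 1 - E/t" using assms by (simp add: field_simps)
  have "(1 - E/t)^2 \<le> (1 - 1/t)^2"
    using assms pos by (intro power_mono) (auto simp: divide_right_mono)
  also have "\<dots> \<le> 1 - 1/t" using assms by (simp add: power2_eq_square field_simps)
  finally have "1 \<le> (1 - 1/t) / (1 - E/t)^2"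
    using zero_less_power[OF pos, of 2] by (simp add: le_divide_eq)
  then show ?thesis unfolding excess_bound_def using assms by simp
qed

lemma g1_prime_eq:
  assumes "3 \<le> p"
  shows "g1_prime p = 1 / (1 - real p powr alpha / real p)"
proof -
  define a where "a = real p powr alpha"
  have p: "1 < real p" using assms by simp
  have "0 < a" "a < real p" unfolding a_def using p powr_alpha_less by auto
  moreover have "real p powr xi = real p / a" unfolding xi_eq a_def using p by (simp add: powr_diff)
  ultimately have "g1_prime p = (real p / a) / (real p / a - 1)" using assms by (simp add: g1_prime_def)
  also have "\<dots> = 1 / (1 - a / real p)"
    using \<open>0 < a\<close> \<open>a < real p\<close> by (simp add: field_simps)
  finally show ?thesis unfolding a_def .
qed

lemma excess_eq_excess_bound:
  assumes "4 \<le> p"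
  shows "excess p = excess_bound (real p powr alpha) (real p)"
proof -
  have "(c * (1/u)^2 / t - 1/t) = (c / u^2 - 1) / t" for c u t :: real
    by (simp add: power_one_over diff_divide_distrib)
  then show ?thesis using assms g1_prime_eq[of p]
    by (simp add: excess_def euler_factor_def excess_bound_def)
qed

lemma excess_nonneg:
  assumes "2 \<le> p"
  shows "0 \<le> excess p"
proof (cases "p = 2 \<or> p = 3")
  case True
  then show ?thesis by (auto simp: excess_def euler_factor_def)
next
  case False
  then have "4 \<le> p" using assms by auto
  then show ?thesis
    using excess_eq_excess_bound excess_bound_nonneg one_le_powr_alpha powr_alpha_less by simp
qed

lemma excess_2: "excess 2 = 10609/10000"
  by (simp add: excess_def euler_factor_def g1_prime_def power2_eq_square)

lemma excess_3_le: "excess 3 \<le> 5225/10000"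
proof -
  define a where "a = real 3 powr alpha"
  have "a \<le> exp (1/24)" unfolding a_def using powr_alpha_le_exp[of 3 2 1] by simp
  also have "\<dots> \<le> 1 + 1/24 + (1/24)^2" by (rule exp_bound) auto
  finally have "1127/1728 \<le> 1 - a/3" by (simp add: power2_eq_square)
  then have "1/(1 - a/3)^2 \<le> 1/(1127/1728)^2"
    by (intro divide_left_mono power_mono mult_pos_pos) auto
  then have "excess 3 \<le> (2/9) * (1/(1127/1728)^2)"
    using g1_prime_eq[of 3] by (simp add: excess_def euler_factor_def a_def power_one_over)
  also have "\<dots> \<le> 5225/10000" by (simp add: power2_eq_square)
  finally show ?thesis .
qed

lemma excess_le_below_100:
  assumes "4 \<le> p" "p \<le> 100"
  shows "excess p \<le> excess_bound (43/36) (real p)"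
proof -
  have "real p powr alpha \<le> exp (1/6)" using assms powr_alpha_le_exp[of p 1 2] by simp
  also have "\<dots> \<le> 1 + 1/6 + (1/6)^2" by (rule exp_bound) auto
  finally have "real p powr alpha \<le> 43/36" by (simp add: power2_eq_square)
  then show ?thesis
    using assms excess_eq_excess_bound one_le_powr_alpha[of "real p"]
    by (simp add: excess_bound_mono)
qed

lemma excess_bound_le_linear:
  assumes "0 \<le> E" "E \<le> Q * t" "Q < 1" "1 \<le> t"
  shows "excess_bound E t \<le> 2 * E / ((1 - Q)^2 * t^2)"
proof -
  define q where "q = E / t"
  have q: "0 \<le> q" "q \<le> Q" using assms by (auto simp: q_def divide_le_eq mult.commute)
  have pos: "0 < 1 - q" using q assms by simp
  have "(1 - 1/t) / (1 - q)^2 - 1 \<le> 1 / (1 - q)^2 - 1"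
    using assms by (simp add: divide_right_mono)
  also have "\<dots> = (1 - (1 - q)^2) / (1 - q)^2" using pos by (simp add: diff_divide_distrib)
  also have "\<dots> = q * (2 - q) / (1 - q)^2" by (simp add: power2_eq_square algebra_simps)
  also have "\<dots> \<le> 2 * q / (1 - q)^2" using q by (intro divide_right_mono) (auto simp: algebra_simps)
  also have "\<dots> \<le> 2 * q / (1 - Q)^2"
    using q assms by (intro divide_left_mono power_mono mult_pos_pos) auto
  finally have "(1 - 1/t) / (1 - q)^2 - 1 \<le> 2 * q / (1 - Q)^2" .
  then have "excess_bound E t \<le> 2 * q / (1 - Q)^2 / t"
    unfolding excess_bound_def q_def [symmetric] using assms by (intro divide_right_mono) auto
  also have "\<dots> = 2 * E / ((1 - Q)^2 * t^2)"
    using assms by (simp add: q_def power2_eq_square)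
  finally show ?thesis .
qed

lemma excess_le_above_100:
  assumes "100 < p"
  shows "excess p \<le> 2448/10000 / (real p * sqrt (real p))"
proof -
  define s where "s = sqrt (real p)"
  have p: "100 < real p" using assms by simp
  have s: "10 < s" "s * s = real p" using p real_sqrt_less_mono[of 100 "real p"] by (simp_all add: s_def)
  have "real p powr (alpha - 1/2) \<le> 100 powr (alpha - 1/2)"
    using p alpha_le by (intro powr_mono2') auto
  also have "\<dots> = 100 powr alpha / 10" by (simp add: powr_diff powr_half_sqrt)
  also have "\<dots> \<le> 43/360"
    using powr_alpha_le_exp[of 100 1 2] exp_bound[of "1/6::real"] by (simp add: power2_eq_square)
  finally have E: "real p powr alpha \<le> 43/360 * s"
    using p by (simp add: s_def powr_diff powr_half_sqrt divide_le_eq)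
  have "43/360 * s \<le> 43/3600 * (s * s)" using s(1) by simp
  then have E_lin: "real p powr alpha \<le> 43/3600 * real p" using E s(2) by linarith
  have "excess p = excess_bound (real p powr alpha) (real p)"
    using assms by (intro excess_eq_excess_bound) simp
  also have "\<dots> \<le> 2 * real p powr alpha / ((1 - 43/3600)^2 * (real p)^2)"
    using E_lin p by (intro excess_bound_le_linear) auto
  also have "\<dots> \<le> 2 * (43/360 * s) / ((1 - 43/3600)^2 * (real p)^2)"
    using E by (intro divide_right_mono) auto
  also have "\<dots> = (2 * (43/360) / (1 - 43/3600)^2) / (real p * s)"
  proof -
    have "(real p)^2 = real p * s * s" using s(2) by (simp add: power2_eq_square)
    then show ?thesis using s(1) p by (simp add: field_simps)
  qed
  also have "\<dots> \<le> 2448/10000 / (real p * s)"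
    using s p by (intro divide_right_mono) (auto simp: power2_eq_square)
  finally show ?thesis unfolding s_def .
qed

lemma coprime_6_iff: "coprime n 6 \<longleftrightarrow> \<not> 2 dvd n \<and> \<not> 3 dvd (n::nat)"
proof -
  have "coprime n 6 \<longleftrightarrow> coprime n 2 \<and> coprime n 3"
    using coprime_mult_right_iff[of n 2 3] by simp
  moreover have "coprime n 3 \<longleftrightarrow> \<not> 3 dvd n"
    using prime_imp_coprime[of 3 n] coprime_common_divisor[of n 3 3] by (auto simp: coprime_commute)
  ultimately show ?thesis by (simp add: coprime_right_2_iff_odd)
qed

lemma prime_coprime_6: "prime p \<Longrightarrow> p \<noteq> 2 \<Longrightarrow> p \<noteq> 3 \<Longrightarrow> coprime (p::nat) 6"
  using primes_dvd_imp_eq[of 2 p] primes_dvd_imp_eq[of 3 p] by (auto simp: coprime_6_iff)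

lemma prime_ge_5: "prime p \<Longrightarrow> p \<noteq> 2 \<Longrightarrow> p \<noteq> 3 \<Longrightarrow> 5 \<le> (p::nat)"
  using primes_dvd_imp_eq[of 2 p] prime_ge_2_nat[of p] by (cases "p = 4") auto

(* 5, 7, 11, 13, 17, 19, ...: the integers > 1 coprime to 6 in increasing order *)
definition coprime6_nth :: "nat \<Rightarrow> nat" where
  "coprime6_nth j = 3 * j + 5 - j mod 2"

lemma coprime6_nth_surj:
  assumes "5 \<le> n" "coprime n 6"
  obtains j where "coprime6_nth j = n" "3 * j + 4 \<le> n"
proof -
  have "\<exists>k. n = 6 * k + 5 \<or> n = 6 * k + 7" using assms unfolding coprime_6_iff by presburger
  then obtain k where "n = 6 * k + 5 \<or> n = 6 * k + 7" ..
  then show ?thesis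
  proof
    assume "n = 6 * k + 5"
    then show ?thesis by (intro that [of "2 * k"]) (simp_all add: coprime6_nth_def)
  next
    assume "n = 6 * k + 7"
    then show ?thesis by (intro that [of "2 * k + 1"]) (simp_all add: coprime6_nth_def)
  qed
qed

section \<open>The Euler product of the excesses\<close>

lemma sum_excess_bound_coprime6_nth_le:
  "(\<Sum>j<32. excess_bound (43/36) (real (coprime6_nth j))) \<le> 1611/10000"
proof -
  have "excess_bound (43/36) 5 \<le> 76201/1000000"
    "excess_bound (43/36) 7 \<le> 35161/1000000"
    "excess_bound (43/36) 11 \<le> 13097/1000000"
    "excess_bound (43/36) 13 \<le> 9178/1000000"
    "excess_bound (43/36) 17 \<le> 5224/1000000"
    "excess_bound (43/36) 19 \<le> 4144/1000000"
    "excess_bound (43/36) 23 \<le> 2791/1000000"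
    "excess_bound (43/36) 25 \<le> 2351/1000000"
    "excess_bound (43/36) 29 \<le> 1733/1000000"
    "excess_bound (43/36) 31 \<le> 1512/1000000"
    "excess_bound (43/36) 35 \<le> 1180/1000000"
    "excess_bound (43/36) 37 \<le> 1054/1000000"
    "excess_bound (43/36) 41 \<le> 855/1000000"
    "excess_bound (43/36) 43 \<le> 776/1000000"
    "excess_bound (43/36) 47 \<le> 648/1000000"
    "excess_bound (43/36) 49 \<le> 595/1000000"
    "excess_bound (43/36) 53 \<le> 508/1000000"
    "excess_bound (43/36) 55 \<le> 471/1000000"
    "excess_bound (43/36) 59 \<le> 409/1000000"
    "excess_bound (43/36) 61 \<le> 382/1000000"
    "excess_bound (43/36) 65 \<le> 336/1000000"
    "excess_bound (43/36) 67 \<le> 316/1000000"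
    "excess_bound (43/36) 71 \<le> 281/1000000"
    "excess_bound (43/36) 73 \<le> 266/1000000"
    "excess_bound (43/36) 77 \<le> 239/1000000"
    "excess_bound (43/36) 79 \<le> 227/1000000"
    "excess_bound (43/36) 83 \<le> 205/1000000"
    "excess_bound (43/36) 85 \<le> 196/1000000"
    "excess_bound (43/36) 89 \<le> 179/1000000"
    "excess_bound (43/36) 91 \<le> 171/1000000"
    "excess_bound (43/36) 95 \<le> 157/1000000"
    "excess_bound (43/36) 97 \<le> 150/1000000"
    by (simp_all add: excess_bound_def power2_eq_square)
  then show ?thesis
    by (simp add: lessThan_nat_numeral coprime6_nth_def del: lessThan_Suc)
qed

lemma sum_excess_small_primes:
  "(\<Sum>p | prime p \<and> 5 \<le> p \<and> p \<le> 100. excess p) \<le> 1611/10000"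
proof -
  have "(\<Sum>p | prime p \<and> 5 \<le> p \<and> p \<le> 100. excess p)
      \<le> (\<Sum>j<32. excess_bound (43/36) (real (coprime6_nth j)))"
  proof (rule sum_le_included [where i = coprime6_nth])
    show "finite {p::nat. prime p \<and> 5 \<le> p \<and> p \<le> 100}"
      by (rule finite_subset [of _ "{..100::nat}"]) auto
    show "\<forall>j\<in>{..<32}. 0 \<le> excess_bound (43/36) (real (coprime6_nth j))"
      by (auto simp: coprime6_nth_def intro!: excess_bound_nonneg)
    show "\<forall>p\<in>{p. prime p \<and> 5 \<le> p \<and> p \<le> 100}. \<exists>j\<in>{..<32}.
        coprime6_nth j = p \<and> excess p \<le> excess_bound (43/36) (real (coprime6_nth j))"
    proof
      fix p :: nat assume p: "p \<in> {p. prime p \<and> 5 \<le> p \<and> p \<le> 100}"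
      then have "coprime p 6" by (auto intro: prime_coprime_6)
      then obtain j where j: "coprime6_nth j = p" using p coprime6_nth_surj by blast
      then have "coprime6_nth j \<le> 100" using p by simp
      then have "j < 32" unfolding coprime6_nth_def by presburger
      then show "\<exists>j\<in>{..<32}.
          coprime6_nth j = p \<and> excess p \<le> excess_bound (43/36) (real (coprime6_nth j))"
        using p j excess_le_below_100 by auto
    qed
  qed simp
  also have "\<dots> \<le> 1611/10000" by (rule sum_excess_bound_coprime6_nth_le)
  finally show ?thesis .
qed

lemma inv_mul_sqrt_le_diff:
  fixes t :: real
  assumes "3 \<le> t"
  shows "1 / (t * sqrt t) \<le> 1 / sqrt (t - 2) - 1 / sqrt t"
proof -
  define a b where "a = sqrt (t - 2)" and "b = sqrt t"
  have ab: "0 < a" "a \<le> b" "0 < b" "b * b = t" "a * a = t - 2"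
    using assms by (simp_all add: a_def b_def)
  have num: "(b - a) * (a + b) = 2" using ab by (simp add: algebra_simps)
  have den: "b * b * (b + b) = 2 * t * b" using ab by (simp add: algebra_simps flip: ab(4))
  have "1 / (t * b) = 2 / (b * b * (b + b))" using ab by (simp add: den)
  also have "\<dots> \<le> 2 / (a * b * (a + b))"
    using ab by (intro divide_left_mono mult_mono mult_pos_pos add_mono) auto
  also have "\<dots> = (b - a) * (a + b) / (a * b * (a + b))" by (simp only: num)
  also have "\<dots> = (b - a) / (a * b)" using ab(1,3) by simp
  also have "\<dots> = 1 / a - 1 / b" using ab(1,3) by (simp add: field_simps)
  finally show ?thesis by (simp add: a_def b_def)
qed

lemma sum_excess_large_primes:
  "(\<Sum>p | prime p \<and> 100 < p \<and> real p \<le> y. excess p) \<le> 2448/10000 * (10/99)"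
proof -
  define g where "g j = 1 / sqrt (real (2 * j + 99))" for j :: nat
  define M where "M = nat \<lceil>y\<rceil>"
  have "(\<Sum>p | prime p \<and> 100 < p \<and> real p \<le> y. excess p)
      \<le> (\<Sum>j<M. 2448/10000 * (g j - g (Suc j)))"
  proof (rule sum_le_included [where i = "\<lambda>j. 2 * j + 101"])
    show "finite {p. prime p \<and> 100 < p \<and> real p \<le> y}"
      by (rule finite_subset [OF _ finite_nat_real_le]) auto
    show "\<forall>j\<in>{..<M}. 0 \<le> 2448/10000 * (g j - g (Suc j))"
      by (auto simp: g_def intro!: divide_left_mono)
    show "\<forall>p\<in>{p. prime p \<and> 100 < p \<and> real p \<le> y}. \<exists>j\<in>{..<M}.
        2 * j + 101 = p \<and> excess p \<le> 2448/10000 * (g j - g (Suc j))"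
    proof
      fix p assume p: "p \<in> {p. prime p \<and> 100 < p \<and> real p \<le> y}"
      define j where "j = (p - 101) div 2"
      have "odd p" using p prime_odd_nat[of p] by auto
      then have pj: "2 * j + 101 = p" using p by (simp add: j_def)
      have "p \<le> M" using p ceiling_mono[of "real p" y] by (simp add: M_def le_nat_iff)
      then have "j < M" using pj by linarith
      have "excess p \<le> 2448/10000 * (1 / (real p * sqrt (real p)))"
        using excess_le_above_100 p by simp
      also have "\<dots> \<le> 2448/10000 * (g j - g (Suc j))"
        using inv_mul_sqrt_le_diff[of "real p"] p pj
        by (intro mult_left_mono) (auto simp: g_def add.commute)
      finally show "\<exists>j\<in>{..<M}. 2 * j + 101 = p \<and> excess p \<le> 2448/10000 * (g j - g (Suc j))"
        using pj \<open>j < M\<close> by auto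
    qed
  qed simp
  also have "\<dots> = 2448/10000 * (g 0 - g M)"
    by (simp only: sum_distrib_left [symmetric] sum_lessThan_telescope')
  also have "\<dots> \<le> 2448/10000 * (10/99)"
  proof -
    have "99/10 \<le> sqrt (99::real)" by (rule real_le_rsqrt) (simp add: power2_eq_square)
    then have "g 0 \<le> 10/99" by (simp add: g_def divide_le_eq)
    moreover have "0 \<le> g M" by (simp add: g_def)
    ultimately show ?thesis by simp
  qed
  finally show ?thesis .
qed

lemma exp_186_le: "exp (186/1000::real) \<le> 121/100"
proof -
  have "exp (186/4000::real) \<le> 1 + 186/4000 + (186/4000)^2" by (rule exp_bound) auto
  then have "exp (186/4000::real) \<le> 10487/10000" by (simp add: power2_eq_square)
  then have "exp (186/4000::real) ^ 4 \<le> (10487/10000)^4" by (rule power_mono) simp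
  also have "\<dots> \<le> 121/100" by (simp add: eval_nat_numeral)
  finally have "exp (real 4 * (186/4000::real)) \<le> 121/100" by (subst exp_of_nat_mult)
  then show ?thesis by simp
qed

lemma prod_one_plus_excess_le: "(\<Prod>p | prime p \<and> real p \<le> y. 1 + excess p) \<le> 38/10"
proof -
  define R where "R = {p. prime p \<and> 5 \<le> p \<and> real p \<le> y}"
  have fin: "finite R" unfolding R_def by (rule finite_subset [OF _ finite_nat_real_le]) auto
  have R_nonneg: "0 \<le> excess p" if "p \<in> R" for p
    using that by (intro excess_nonneg) (auto simp: R_def)
  have "(\<Prod>p | prime p \<and> real p \<le> y. 1 + excess p) \<le> (\<Prod>p\<in>insert 2 (insert 3 R). 1 + excess p)"
  proof (rule prod_mono2)
    show "{p. prime p \<and> real p \<le> y} \<subseteq> insert 2 (insert 3 R)"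
      unfolding R_def using prime_ge_5 by auto
  qed (use fin R_nonneg excess_nonneg prime_ge_2_nat in auto)
  also have "\<dots> = (1 + excess 2) * ((1 + excess 3) * (\<Prod>p\<in>R. 1 + excess p))"
    using fin by (simp add: R_def)
  also have "\<dots> \<le> (20609/10000) * ((15225/10000) * (121/100))"
  proof -
    have "(\<Sum>p\<in>R. excess p)
        = (\<Sum>p | prime p \<and> 5 \<le> p \<and> p \<le> 100 \<and> real p \<le> y. excess p)
          + (\<Sum>p | prime p \<and> 100 < p \<and> real p \<le> y. excess p)"
      unfolding R_def by (subst sum.union_disjoint [symmetric])
        (auto intro!: sum.cong finite_subset [OF _ finite_nat_real_le])
    also have "(\<Sum>p | prime p \<and> 5 \<le> p \<and> p \<le> 100 \<and> real p \<le> y. excess p)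
        \<le> (\<Sum>p | prime p \<and> 5 \<le> p \<and> p \<le> 100. excess p)"
      by (rule sum_mono2) (auto intro: finite_subset [of _ "{..100::nat}"] excess_nonneg)
    finally have "(\<Sum>p\<in>R. excess p) \<le> 186/1000"
      using sum_excess_small_primes sum_excess_large_primes[of y] by simp
    then have "exp (\<Sum>p\<in>R. excess p) \<le> 121/100"
      using exp_186_le by (meson exp_le_cancel_iff order_trans)
    moreover have "(\<Prod>p\<in>R. 1 + excess p) \<le> exp (\<Sum>p\<in>R. excess p)"
      unfolding exp_sum [OF fin] using R_nonneg
      by (intro prod_mono) (auto simp: add.commute exp_ge_add_one_self)
    ultimately have "(\<Prod>p\<in>R. 1 + excess p) \<le> 121/100" by linarith
    moreover have "0 \<le> (\<Prod>p\<in>R. 1 + excess p)"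
      using R_nonneg by (intro prod_nonneg) (auto intro: add_nonneg_nonneg)
    ultimately show ?thesis
      using excess_2 excess_3_le excess_nonneg[of 3] by (intro mult_mono mult_nonneg_nonneg) auto
  qed
  also have "\<dots> \<le> 38/10" by simp
  finally show ?thesis .
qed

section \<open>Sums of 1/(n log(X/n)^2) over integers coprime to 6\<close>

lemma mul_sq_ln_gap_mono:
  fixes c s t :: real
  assumes "0 < s" "s \<le> t" "2 \<le> c - ln t"
  shows "s * (c - ln s)^2 \<le> t * (c - ln t)^2"
proof (rule DERIV_nonneg_imp_nondecreasing [OF assms(2)])
  fix z assume z: "s \<le> z" "z \<le> t"
  then have "0 < z" using assms by simp
  moreover have "ln z \<le> ln t" using z \<open>0 < z\<close> by simp
  ultimately have "0 < z" "2 \<le> c - ln z" using assms by linarith+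
  then have "0 \<le> (c - ln z) * ((c - ln z) - 2)" by simp
  moreover have "((\<lambda>z. z * (c - ln z)^2) has_real_derivative (c - ln z) * ((c - ln z) - 2)) (at z)"
    using \<open>0 < z\<close> by (auto intro!: derivative_eq_intros simp: field_simps power2_eq_square)
  ultimately show "\<exists>y. ((\<lambda>z. z * (c - ln z)^2) has_real_derivative y) (at z) \<and> 0 \<le> y" by blast
qed

lemma inv_ln_gap_increment:
  fixes c a h t :: real
  assumes "0 < a" "0 < h" "a + h \<le> t" "2 \<le> c - ln t"
  shows "h / (t * (c - ln t)^2) \<le> 1 / (c - ln (a + h)) - 1 / (c - ln a)"
proof -
  have gap: "2 \<le> c - ln z" if "0 < z" "z \<le> t" for z
  proof -
    have "ln z \<le> ln t" using that by (subst ln_le_cancel_iff) auto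
    then show ?thesis using assms by linarith
  qed
  have "((\<lambda>z. 1 / (c - ln z)) has_real_derivative 1 / (z * (c - ln z)^2)) (at z)"
    if "a \<le> z" "z \<le> a + h" for z
    using that assms gap[of z]
    by (auto intro!: derivative_eq_intros simp: field_simps power2_eq_square)
  then obtain z where z: "a < z" "z < a + h"
    and mvt: "1 / (c - ln (a + h)) - 1 / (c - ln a) = (a + h - a) * (1 / (z * (c - ln z)^2))"
    using MVT2[of a "a + h" "\<lambda>z. 1 / (c - ln z)" "\<lambda>z. 1 / (z * (c - ln z)^2)"] assms by auto
  have "z * (c - ln z)^2 \<le> t * (c - ln t)^2" using z assms by (intro mul_sq_ln_gap_mono) auto
  moreover have "0 < z * (c - ln z)^2" using z assms gap[of z] by simp
  ultimately have "1 / (t * (c - ln t)^2) \<le> 1 / (z * (c - ln z)^2)"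
    using z assms by (intro divide_left_mono mult_pos_pos) auto
  then show ?thesis using mvt assms by (simp add: divide_inverse mult_left_mono)
qed

lemma sum_coprime6_ge_5_le:
  fixes c N :: real
  assumes N: "1 \<le> N" and gap: "3 \<le> c - ln N"
  shows "(\<Sum>n | 5 \<le> n \<and> coprime n 6 \<and> real n \<le> N. 1 / (real n * (c - ln (real n))^2))
    \<le> (1 / (c - ln N) - 1 / c) / 3"
proof -
  define u where "u t = 1 / (c - ln t)" for t :: real
  define M where "M = nat \<lfloor>N\<rfloor>"
  define J where "J = (M - 1) div 3"
  have gap_le: "3 \<le> c - ln t" if "0 < t" "t \<le> N" for t
  proof -
    have "ln t \<le> ln N" using that by (subst ln_le_cancel_iff) auto
    then show ?thesis using gap by simp
  qed
  have u_mono: "u s \<le> u t" if "0 < s" "s \<le> t" "t \<le> N" for s t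
    using that gap_le[of s] gap_le[of t] unfolding u_def by (intro divide_left_mono mult_pos_pos) auto
  have le_M: "real n \<le> N \<longleftrightarrow> n \<le> M" for n :: nat
    using N by (simp add: M_def le_nat_iff le_floor_iff)
  have "1 \<le> M" using le_M[of 1] N by simp
  then have J: "real (3 * J + 1) \<le> N" using le_M unfolding J_def by presburger
  have "(\<Sum>n | 5 \<le> n \<and> coprime n 6 \<and> real n \<le> N. 1 / (real n * (c - ln (real n))^2))
      \<le> (\<Sum>j<J. (u (real (3 * j + 4)) - u (real (3 * j + 1))) / 3)"
  proof (rule sum_le_included [where i = coprime6_nth])
    show "finite {n. 5 \<le> n \<and> coprime n 6 \<and> real n \<le> N}"
      by (rule finite_subset [OF _ finite_nat_real_le]) auto
    show "\<forall>j\<in>{..<J}. 0 \<le> (u (real (3 * j + 4)) - u (real (3 * j + 1))) / 3"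
      using J u_mono by auto
    show "\<forall>n\<in>{n. 5 \<le> n \<and> coprime n 6 \<and> real n \<le> N}. \<exists>j\<in>{..<J}. coprime6_nth j = n \<and>
        1 / (real n * (c - ln (real n))^2) \<le> (u (real (3 * j + 4)) - u (real (3 * j + 1))) / 3"
    proof
      fix n assume n: "n \<in> {n. 5 \<le> n \<and> coprime n 6 \<and> real n \<le> N}"
      then obtain j where j: "coprime6_nth j = n" "3 * j + 4 \<le> n"
        using coprime6_nth_surj by blast
      then have "j < J" using n le_M unfolding J_def by auto
      have "3 / (real n * (c - ln (real n))^2)
          \<le> 1 / (c - ln (real (3 * j + 1) + 3)) - 1 / (c - ln (real (3 * j + 1)))"
        using j n gap_le[of "real n"] by (intro inv_ln_gap_increment) auto
      then show "\<exists>j\<in>{..<J}. coprime6_nth j = n \<and>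
          1 / (real n * (c - ln (real n))^2) \<le> (u (real (3 * j + 4)) - u (real (3 * j + 1))) / 3"
        using j \<open>j < J\<close> by (auto simp: u_def add.commute)
    qed
  qed simp
  also have "\<dots> = (u (real (3 * J + 1)) - u 1) / 3"
  proof -
    have "(\<Sum>j<J. u (real (3 * Suc j + 1)) - u (real (3 * j + 1))) = u (real (3 * J + 1)) - u 1"
      by (subst sum_lessThan_telescope) simp
    then show ?thesis by (simp add: sum_divide_distrib [symmetric] add.commute)
  qed
  also have "\<dots> \<le> (u N - u 1) / 3" using J u_mono[of "real (3 * J + 1)" N] by simp
  finally show ?thesis by (simp add: u_def)
qed

lemma sum_coprime6_inv_mul_ln_sq_le:
  fixes X N :: real
  assumes X: "0 < X" and N: "1 \<le> N" and gap: "3 \<le> ln (X / N)"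
  shows "(\<Sum>n | 1 \<le> n \<and> coprime n 6 \<and> real n \<le> N. 1 / (real n * (ln (X / real n))^2))
    \<le> 1 / (3 * ln (X / N))"
proof -
  define c where "c = ln X"
  define S where "S = {n. 5 \<le> n \<and> coprime n 6 \<and> real n \<le> N}"
  have ln_div: "ln (X / t) = c - ln t" if "0 < t" for t
    using X that by (simp add: c_def ln_div)
  have gap': "3 \<le> c - ln N" using gap ln_div[of N] N by simp
  moreover have "0 \<le> ln N" using N by simp
  ultimately have "3 \<le> c" by linarith
  have "{n. 1 \<le> n \<and> coprime n 6 \<and> real n \<le> N} = insert 1 S"
    using N unfolding S_def coprime_6_iff by auto presburger
  moreover have "finite S" unfolding S_def by (rule finite_subset [OF _ finite_nat_real_le]) auto
  moreover have "1 \<notin> S" by (simp add: S_def)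
  moreover have "(\<Sum>n\<in>S. 1 / (real n * (ln (X / real n))^2))
      = (\<Sum>n\<in>S. 1 / (real n * (c - ln (real n))^2))"
    by (intro sum.cong) (auto simp: S_def ln_div)
  ultimately have "(\<Sum>n | 1 \<le> n \<and> coprime n 6 \<and> real n \<le> N. 1 / (real n * (ln (X / real n))^2))
      = 1 / c^2 + (\<Sum>n\<in>S. 1 / (real n * (c - ln (real n))^2))"
    by (simp add: c_def)
  also have "\<dots> \<le> 1 / c^2 + (1 / (c - ln N) - 1 / c) / 3"
    unfolding S_def by (rule add_left_mono [OF sum_coprime6_ge_5_le [OF N gap']])
  also have "\<dots> \<le> 1 / ((c - ln N) * 3)"
  proof -
    have "1 / c^2 \<le> 1 / (c * 3)"
      using \<open>3 \<le> c\<close> by (intro divide_left_mono) (auto simp: power2_eq_square)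
    moreover have "(1 / (c - ln N) - 1 / c) / 3 = 1 / ((c - ln N) * 3) - 1 / (c * 3)"
      by (simp add: diff_divide_distrib)
    ultimately show ?thesis by linarith
  qed
  finally show ?thesis using ln_div[of N] N by (simp add: mult.commute)
qed

section \<open>Expanding the summand\<close>

lemma prod_prime_factors_squarefree:
  assumes "squarefree (d::nat)"
  shows "\<Prod>(prime_factors d) = d"
proof -
  have "0 < d" using assms by (cases d) auto
  have "multiplicity p d = 1" if "p \<in> prime_factors d" for p
    using assms that \<open>0 < d\<close> squarefree_factorial_semiring'[of d] by auto
  then have "(\<Prod>p\<in>prime_factors d. p ^ multiplicity p d) = \<Prod>(prime_factors d)"
    by (intro prod.cong) auto
  then show ?thesis using prime_factorization_nat[OF \<open>0 < d\<close>] by simp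
qed

lemma prod_mult_prod_diff_prime_factors:
  assumes "squarefree (d::nat)" "B \<subseteq> prime_factors d"
  shows "\<Prod>B * \<Prod>(prime_factors d - B) = d"
  using prod.subset_diff[of B "prime_factors d" "\<lambda>p. p"] assms prod_prime_factors_squarefree
  by (simp add: mult.commute)

definition summand :: "real \<Rightarrow> nat \<Rightarrow> real" where
  "summand x d = real_of_int ((moebius_mu d)^2) * real (totient d)
     / ((real d)^2 * (ln (x / real d))^2) * (g1 d)^2"

lemma summand_squarefree:
  assumes "squarefree d"
  shows "summand x d = (\<Prod>p\<in>prime_factors d. euler_factor p) / (ln (x / real d))^2"
proof -
  define P where "P = prime_factors d"
  define A where "A = (\<Prod>p\<in>P. 1 - 1 / real p)"
  define G where "G = (\<Prod>p\<in>P. (g1_prime p)^2)"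
  have "(\<Prod>p\<in>P. real p) = real (\<Prod>P)" by simp
  also have "\<Prod>P = d" unfolding P_def by (rule prod_prime_factors_squarefree [OF assms])
  finally have d: "real d = (\<Prod>p\<in>P. real p)" ..
  have "real d \<noteq> 0" using assms by (cases d) auto
  have mu: "real_of_int ((moebius_mu d)^2) = 1"
    using assms by (simp add: moebius_mu_def power_mult_distrib [symmetric] power_even_eq [symmetric] power_mult)
  have tot: "real (totient d) = real d * A"
    unfolding A_def P_def by (rule totient_formula2)
  have g: "(g1 d)^2 = G"
    unfolding g1_def G_def P_def by (simp add: prod_power_distrib)
  have E: "(\<Prod>p\<in>P. euler_factor p) = A * G / real d"
    unfolding euler_factor_def A_def G_def d by (simp add: prod.distrib prod_dividef)
  have cancel: "a * b / (a^2 * L) * c = b * c / a / L" if "a \<noteq> 0" for a b c L :: real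
    using that by (cases "L = 0") (simp_all add: field_simps power2_eq_square)
  have "summand x d = real d * A / ((real d)^2 * (ln (x / real d))^2) * G"
    unfolding summand_def mu tot g by simp
  also have "\<dots> = A * G / real d / (ln (x / real d))^2" by (rule cancel) fact
  finally show ?thesis unfolding P_def [symmetric] E .
qed

lemma prod_euler_factor_expand:
  assumes "finite P"
  shows "(\<Prod>p\<in>P. euler_factor p)
    = (\<Sum>B | P \<inter> {2, 3} \<subseteq> B \<and> B \<subseteq> P. (\<Prod>p\<in>B. excess p) / real (\<Prod>(P - B)))"
proof -
  define f where "f p = (if p = 2 \<or> p = 3 then 0 else 1 / real p)" for p :: nat
  have "(\<Prod>p\<in>P. euler_factor p) = (\<Prod>p\<in>P. excess p + f p)"
    by (intro prod.cong) (auto simp: excess_def f_def)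
  also have "\<dots> = (\<Sum>B\<in>Pow P. (\<Prod>p\<in>B. excess p) * (\<Prod>p\<in>P - B. f p))"
    by (rule prod_add [OF assms])
  also have "\<dots> = (\<Sum>B | P \<inter> {2, 3} \<subseteq> B \<and> B \<subseteq> P. (\<Prod>p\<in>B. excess p) * (\<Prod>p\<in>P - B. f p))"
  proof (rule sum.mono_neutral_right)
    show "\<forall>B\<in>Pow P - {B. P \<inter> {2, 3} \<subseteq> B \<and> B \<subseteq> P}. (\<Prod>p\<in>B. excess p) * (\<Prod>p\<in>P - B. f p) = 0"
    proof
      fix B assume "B \<in> Pow P - {B. P \<inter> {2, 3} \<subseteq> B \<and> B \<subseteq> P}"
      then have "2 \<in> P - B \<or> 3 \<in> P - B" by auto
      then obtain q where "q \<in> P - B" "q = 2 \<or> q = 3" by blast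
      then have "q \<in> P - B" "f q = 0" by (auto simp: f_def)
      then show "(\<Prod>p\<in>B. excess p) * (\<Prod>p\<in>P - B. f p) = 0"
        using assms by (simp add: prod_zero_iff) blast
    qed
  qed (use assms in auto)
  also have "\<dots> = (\<Sum>B | P \<inter> {2, 3} \<subseteq> B \<and> B \<subseteq> P. (\<Prod>p\<in>B. excess p) / real (\<Prod>(P - B)))"
  proof (rule sum.cong [OF refl])
    fix B assume "B \<in> {B. P \<inter> {2, 3} \<subseteq> B \<and> B \<subseteq> P}"
    then have "(\<Prod>p\<in>P - B. f p) = (\<Prod>p\<in>P - B. 1 / real p)"
      by (intro prod.cong) (auto simp: f_def)
    also have "\<dots> = 1 / real (\<Prod>(P - B))" by (simp add: prod_dividef)
    finally show "(\<Prod>p\<in>B. excess p) * (\<Prod>p\<in>P - B. f p) = (\<Prod>p\<in>B. excess p) / real (\<Prod>(P - B))"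
      by simp
  qed
  finally show ?thesis .
qed

definition expanded_term :: "real \<Rightarrow> nat set \<Rightarrow> nat \<Rightarrow> real" where
  "expanded_term x B n = (\<Prod>p\<in>B. excess p) / real n / (ln (x / real (\<Prod>B * n)))^2"

lemma summand_eq_sum_expanded_term:
  assumes "squarefree d"
  shows "summand x d = (\<Sum>B | prime_factors d \<inter> {2, 3} \<subseteq> B \<and> B \<subseteq> prime_factors d.
    expanded_term x B (\<Prod>(prime_factors d - B)))"
  unfolding summand_squarefree [OF assms] prod_euler_factor_expand [OF finite_set_mset]
    sum_divide_distrib expanded_term_def
  using prod_mult_prod_diff_prime_factors [OF assms] by (intro sum.cong) auto

definition coprime6_cofactors :: "real \<Rightarrow> nat set \<Rightarrow> nat set" where
  "coprime6_cofactors y B = {n. 1 \<le> n \<and> coprime n 6 \<and> real (\<Prod>B * n) \<le> y}"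

lemma finite_coprime6_cofactors:
  assumes "\<And>p. p \<in> B \<Longrightarrow> prime p"
  shows "finite (coprime6_cofactors y B)"
proof (rule finite_subset [OF _ finite_nat_real_le])
  have "0 < \<Prod>B" using assms by (intro prod_pos) (auto intro: prime_gt_0_nat)
  show "coprime6_cofactors y B \<subseteq> {n. real n \<le> y}"
  proof
    fix n assume "n \<in> coprime6_cofactors y B"
    then have "real (\<Prod>B * n) \<le> y" by (simp only: coprime6_cofactors_def mem_Collect_eq)
    moreover have "real n \<le> real (\<Prod>B * n)" using \<open>0 < \<Prod>B\<close> by (intro of_nat_mono) simp
    ultimately show "n \<in> {n. real n \<le> y}" by simp
  qed
qed

lemma split_prime_factors_mem:
  assumes d: "squarefree d" "real d \<le> y"
    and B: "prime_factors d \<inter> {2, 3} \<subseteq> B" "B \<subseteq> prime_factors d"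
  shows "B \<subseteq> {p. prime p \<and> real p \<le> y}"
    and "\<Prod>(prime_factors d - B) \<in> coprime6_cofactors y B"
proof -
  define n where "n = \<Prod>(prime_factors d - B)"
  have "0 < d" using d by (cases d) auto
  show "B \<subseteq> {p. prime p \<and> real p \<le> y}"
  proof
    fix p assume "p \<in> B"
    then have p: "prime p" "p dvd d" using B by auto
    then have "p \<le> d" using \<open>0 < d\<close> by (simp add: dvd_imp_le)
    then show "p \<in> {p. prime p \<and> real p \<le> y}" using p d by simp
  qed
  have "coprime n 6" unfolding n_def
    by (rule prod_coprime_left) (use B in \<open>auto intro!: prime_coprime_6\<close>)
  moreover have "0 < n" unfolding n_def by (intro prod_pos) (auto intro: prime_gt_0_nat)
  moreover have "\<Prod>B * n = d" unfolding n_def using d B by (intro prod_mult_prod_diff_prime_factors)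
  ultimately show "n \<in> coprime6_cofactors y B"
    using d by (simp add: coprime6_cofactors_def del: of_nat_mult)
qed

lemma sum_summand_le_sum_expanded_term:
  "(\<Sum>d | 1 \<le> d \<and> real d \<le> y. summand x d)
    \<le> (\<Sum>B\<in>Pow {p. prime p \<and> real p \<le> y}. \<Sum>n\<in>coprime6_cofactors y B. expanded_term x B n)"
proof -
  define Dset where "Dset = {d::nat. 1 \<le> d \<and> real d \<le> y}"
  define Py where "Py = {p::nat. prime p \<and> real p \<le> y}"
  define BS where "BS d = (if squarefree d
    then {B. prime_factors d \<inter> {2, 3} \<subseteq> B \<and> B \<subseteq> prime_factors d} else {})" for d :: nat
  have finD: "finite Dset" unfolding Dset_def by (rule finite_subset [OF _ finite_nat_real_le]) auto
  have finBS: "finite (BS d)" for d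
    unfolding BS_def by (auto intro: finite_subset [of _ "Pow (prime_factors d)"])
  have finPy: "finite Py" unfolding Py_def by (rule finite_subset [OF _ finite_nat_real_le]) auto
  have finNS: "finite (coprime6_cofactors y B)" if "B \<in> Pow Py" for B
    using that by (intro finite_coprime6_cofactors) (auto simp: Py_def)
  have "summand x d = (\<Sum>B\<in>BS d. expanded_term x B (\<Prod>(prime_factors d - B)))" for d
  proof (cases "squarefree d")
    case True
    then show ?thesis by (simp add: BS_def summand_eq_sum_expanded_term)
  next
    case False
    then show ?thesis by (simp add: BS_def summand_def moebius_mu_def)
  qed
  then have "(\<Sum>d\<in>Dset. summand x d)
      = (\<Sum>d\<in>Dset. \<Sum>B\<in>BS d. expanded_term x B (\<Prod>(prime_factors d - B)))"
    by simp
  also have "\<dots> = (\<Sum>(d, B)\<in>Sigma Dset BS. expanded_term x B (\<Prod>(prime_factors d - B)))"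
    by (rule sum.Sigma) (use finD finBS in auto)
  also have "\<dots> \<le> (\<Sum>(B, n)\<in>Sigma (Pow Py) (coprime6_cofactors y). expanded_term x B n)"
  proof (rule sum_le_included [where i = "\<lambda>(B, n). (\<Prod>B * n, B)"])
    show "\<forall>z\<in>Sigma (Pow Py) (coprime6_cofactors y). 0 \<le> (case z of (B, n) \<Rightarrow> expanded_term x B n)"
      by (auto simp: expanded_term_def Py_def
          intro!: divide_nonneg_nonneg prod_nonneg excess_nonneg prime_ge_2_nat)
    show "\<forall>w\<in>Sigma Dset BS. \<exists>z\<in>Sigma (Pow Py) (coprime6_cofactors y).
        (case z of (B, n) \<Rightarrow> (\<Prod>B * n, B)) = w \<and>
        (case w of (d, B) \<Rightarrow> expanded_term x B (\<Prod>(prime_factors d - B)))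
          \<le> (case z of (B, n) \<Rightarrow> expanded_term x B n)"
    proof
      fix w assume "w \<in> Sigma Dset BS"
      then obtain d B where w: "w = (d, B)" "squarefree d" "real d \<le> y"
        and B: "prime_factors d \<inter> {2, 3} \<subseteq> B" "B \<subseteq> prime_factors d"
        by (auto simp: BS_def Dset_def split: if_splits)
      then show "\<exists>z\<in>Sigma (Pow Py) (coprime6_cofactors y).
          (case z of (B, n) \<Rightarrow> (\<Prod>B * n, B)) = w \<and>
          (case w of (d, B) \<Rightarrow> expanded_term x B (\<Prod>(prime_factors d - B)))
            \<le> (case z of (B, n) \<Rightarrow> expanded_term x B n)"
        using split_prime_factors_mem [OF w(2,3) B] prod_mult_prod_diff_prime_factors [OF w(2) B(2)]
        by (intro bexI [of _ "(B, \<Prod>(prime_factors d - B))"]) (auto simp: Py_def)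
    qed
  qed (use finD finBS finPy finNS in auto)
  also have "\<dots> = (\<Sum>B\<in>Pow Py. \<Sum>n\<in>coprime6_cofactors y B. expanded_term x B n)"
    by (rule sum.Sigma [symmetric]) (use finPy finNS in auto)
  finally show ?thesis by (simp add: Dset_def Py_def)
qed

lemma sum_expanded_term_le:
  fixes x y :: real
  assumes x: "0 < x" and y: "0 < y" and gap: "3 \<le> ln (x / y)" and B: "\<And>p. p \<in> B \<Longrightarrow> prime p"
  shows "(\<Sum>n\<in>coprime6_cofactors y B. expanded_term x B n)
    \<le> (\<Prod>p\<in>B. excess p) / (3 * ln (x / y))"
proof -
  define m where "m = real (\<Prod>B)"
  define K where "K = (\<Prod>p\<in>B. excess p)"
  define S where "S = {n. 1 \<le> n \<and> coprime n 6 \<and> real n \<le> y / m}"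
  have m: "0 < m" unfolding m_def using B by (simp add: prod_pos prime_gt_0_nat)
  have K: "0 \<le> K" unfolding K_def using B by (intro prod_nonneg excess_nonneg prime_ge_2_nat) auto
  have "real (\<Prod>B * n) \<le> y \<longleftrightarrow> real n \<le> y / m" for n
    using m by (simp add: m_def pos_le_divide_eq ac_simps)
  then have set_eq: "coprime6_cofactors y B = S"
    unfolding coprime6_cofactors_def S_def by simp
  have term_eq: "expanded_term x B n = K * (1 / (real n * (ln (x / m / real n))^2))" for n
  proof -
    have x_div: "x / real (\<Prod>B * n) = x / m / real n" by (simp add: m_def)
    show ?thesis unfolding expanded_term_def K_def [symmetric] x_div by simp
  qed
  show ?thesis
  proof (cases "1 \<le> y / m")
    case True
    have "(\<Sum>n\<in>S. expanded_term x B n) = K * (\<Sum>n\<in>S. 1 / (real n * (ln (x / m / real n))^2))"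
      by (simp add: term_eq sum_distrib_left)
    also have "\<dots> \<le> K * (1 / (3 * ln ((x / m) / (y / m))))"
      using x m gap True K unfolding S_def
      by (intro mult_left_mono sum_coprime6_inv_mul_ln_sq_le) auto
    also have "(x / m) / (y / m) = x / y" using m by simp
    finally show ?thesis unfolding set_eq K_def by simp
  next
    case False
    then have "S = {}" unfolding S_def by auto
    then show ?thesis using K gap unfolding set_eq K_def by simp
  qed
qed

lemma sum_summand_le_euler_product:
  fixes x y :: real
  assumes "0 < x" "0 < y" "3 \<le> ln (x / y)"
  shows "(\<Sum>d | 1 \<le> d \<and> real d \<le> y. summand x d)
    \<le> (\<Prod>p | prime p \<and> real p \<le> y. 1 + excess p) / (3 * ln (x / y))"
proof -
  define Py where "Py = {p::nat. prime p \<and> real p \<le> y}"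
  have "finite Py" unfolding Py_def by (rule finite_subset [OF _ finite_nat_real_le]) auto
  have "(\<Sum>d | 1 \<le> d \<and> real d \<le> y. summand x d)
      \<le> (\<Sum>B\<in>Pow Py. \<Sum>n\<in>coprime6_cofactors y B. expanded_term x B n)"
    unfolding Py_def by (rule sum_summand_le_sum_expanded_term)
  also have "\<dots> \<le> (\<Sum>B\<in>Pow Py. (\<Prod>p\<in>B. excess p) / (3 * ln (x / y)))"
    using assms by (intro sum_mono sum_expanded_term_le) (auto simp: Py_def)
  also have "\<dots> = (\<Prod>p\<in>Py. excess p + 1) / (3 * ln (x / y))"
    using prod_add [OF \<open>finite Py\<close>, of excess "\<lambda>_. 1"] by (simp add: sum_divide_distrib)
  finally show ?thesis by (simp add: Py_def add.commute)
qed

theorem mainTheorem7: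
  fixes x D :: real
  assumes "0 \<le> D" and "D \<le> x"
  shows "(\<Sum>d\<in>{d::nat. 1 \<le> d \<and> real d \<le> min D (x / 10^12)}.
            real_of_int ((moebius_mu d)^2) * real (totient d)
              / ((real d)^2 * (ln (x / real d))^2) * (g1 d)^2) \<le> 0.047"
proof -
  define y where "y = min D (x / 10^12)"
  have "(\<Sum>d | 1 \<le> d \<and> real d \<le> y. summand x d) \<le> 0.047"
  proof (cases "1 \<le> y")
    case False
    then have empty: "{d::nat. 1 \<le> d \<and> real d \<le> y} = {}" by auto
    show ?thesis unfolding empty by simp
  next
    case True
    then have "0 < x" "10^12 \<le> x / y" by (auto simp: y_def field_simps)
    then have gap: "27 \<le> ln (x / y)" by (simp add: ln_ge_27)
    have "(\<Sum>d | 1 \<le> d \<and> real d \<le> y. summand x d)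
        \<le> (\<Prod>p | prime p \<and> real p \<le> y. 1 + excess p) / (3 * ln (x / y))"
      using True gap \<open>0 < x\<close> by (intro sum_summand_le_euler_product) auto
    also have "\<dots> \<le> (38/10) / (3 * 27)"
      using prod_one_plus_excess_le gap by (intro frac_le) auto
    also have "\<dots> \<le> 0.047" by simp
    finally show ?thesis .
  qed
  then show ?thesis by (simp only: y_def summand_def)
qed

end
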